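(* For any $n\geq 2$, $\mathbf{D}_n=(D_n,<)$ is not ultrahomogeneous.
   Context: Fix $n\geq 2$ and a set $D_n\subseteq\mathbb{Q}^n$ which is dense in $\mathbb{Q}^n$ (product topology) and such that no two distinct points of $D_n$ share a common coordinate; $<$ is the product order ($\mathbf{a}<\mathbf{b}$ iff $a_i\leq b_i$ for all $i$ and $\mathbf{a}\neq\mathbf{b}$). A structure is ultrahomogeneous if every isomorphism between finite substructures extends to an automorphism of the whole structure. *)

theory Defs
  imports Complex_Main
begin

text \<open>Points of Q^n are functions 'n => rat for a finite index type 'n with CARD('n) = n.\<close>

definition prod_less :: "('n \<Rightarrow> rat) \<Rightarrow> ('n \<Rightarrow> rat) \<Rightarrow> bool" where
  "prod_less a b \<longleftrightarrow> (\<forall>i. a i \<le> b i) \<and> a \<noteq> b"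

text \<open>Density in Q^n with the product topology: every nonempty basic open box
  (product of open rational intervals) meets D.\<close>
definition dense_in_Qn :: "('n::finite \<Rightarrow> rat) set \<Rightarrow> bool" where
  "dense_in_Qn D \<longleftrightarrow>
     (\<forall>a b :: 'n \<Rightarrow> rat. (\<forall>i. a i < b i) \<longrightarrow> (\<exists>d\<in>D. \<forall>i. a i < d i \<and> d i < b i))"

definition no_shared_coord :: "('n \<Rightarrow> rat) set \<Rightarrow> bool" where
  "no_shared_coord D \<longleftrightarrow> (\<forall>x\<in>D. \<forall>y\<in>D. x \<noteq> y \<longrightarrow> (\<forall>i. x i \<noteq> y i))"

definition partial_iso :: "'a set \<Rightarrow> ('a \<Rightarrow> 'a \<Rightarrow> bool) \<Rightarrow> 'a set \<Rightarrow> 'a set \<Rightarrow> ('a \<Rightarrow> 'a) \<Rightarrow> bool" where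
  "partial_iso A R B C f \<longleftrightarrow> B \<subseteq> A \<and> C \<subseteq> A \<and> bij_betw f B C \<and>
     (\<forall>x\<in>B. \<forall>y\<in>B. R x y \<longleftrightarrow> R (f x) (f y))"

definition automorphism :: "'a set \<Rightarrow> ('a \<Rightarrow> 'a \<Rightarrow> bool) \<Rightarrow> ('a \<Rightarrow> 'a) \<Rightarrow> bool" where
  "automorphism A R g \<longleftrightarrow> partial_iso A R A A g"

definition ultrahomogeneous :: "'a set \<Rightarrow> ('a \<Rightarrow> 'a \<Rightarrow> bool) \<Rightarrow> bool" where
  "ultrahomogeneous A R \<longleftrightarrow>
     (\<forall>B C f. finite B \<and> finite C \<and> partial_iso A R B C f \<longrightarrow>
        (\<exists>g. automorphism A R g \<and> (\<forall>x\<in>B. g x = f x)))"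

end

theory Submission
  imports Defs
begin

text \<open>Choose pairwise incomparable points \<open>a\<close>, \<open>b\<close>, \<open>c\<close> such that \<open>b\<close> lies below the
  coordinatewise maximum of \<open>a\<close> and \<open>c\<close>, and a point \<open>z\<close> above \<open>a\<close> and \<open>b\<close> but not
  above \<open>c\<close>; density provides such points as soon as there are two coordinates. Swapping
  \<open>b\<close> and \<open>c\<close> while fixing \<open>a\<close> is an isomorphism between finite substructures. An
  automorphism \<open>g\<close> extending it sends \<open>z\<close> to a common upper bound of \<open>a\<close> and \<open>c\<close>, which
  therefore lies above \<open>b = g c\<close>; pulling back along \<open>g\<close> puts \<open>z\<close> above \<open>c\<close>.\<close>

lemma not_ultrahomogeneous_by_swap:
  assumes in_A: "a \<in> A" "b \<in> A" "c \<in> A" "z \<in> A"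
    and "a \<noteq> b"
    and antichain: "\<forall>x\<in>{a, b, c}. \<forall>y\<in>{a, b, c}. \<not> R x y"
    and "R a z" "R b z" "\<not> R c z"
    and upper_bound: "\<forall>w\<in>A. R a w \<longrightarrow> R c w \<longrightarrow> R b w"
  shows "\<not> ultrahomogeneous A R"
proof
  assume "ultrahomogeneous A R"
  have "a \<noteq> c" "b \<noteq> c" using \<open>R a z\<close> \<open>R b z\<close> \<open>\<not> R c z\<close> by auto
  define f where "f = id(b := c, c := b)"
  have f_vals: "f a = a" "f b = c" "f c = b"
    using \<open>a \<noteq> b\<close> \<open>a \<noteq> c\<close> by (auto simp: f_def)
  have "bij_betw f {a, b, c} {a, b, c}"
    using f_vals \<open>a \<noteq> b\<close> \<open>a \<noteq> c\<close> \<open>b \<noteq> c\<close> by (auto simp: bij_betw_def inj_on_def)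
  then have "partial_iso A R {a, b, c} {a, b, c} f"
    using in_A antichain f_vals by (simp add: partial_iso_def)
  then obtain g where "automorphism A R g" and g_vals: "g a = a" "g b = c" "g c = b"
    using \<open>ultrahomogeneous A R\<close> f_vals unfolding ultrahomogeneous_def
    by (metis finite.emptyI finite.insertI insertCI)
  then have "bij_betw g A A"
    and preserves: "\<And>x y. x \<in> A \<Longrightarrow> y \<in> A \<Longrightarrow> R x y \<longleftrightarrow> R (g x) (g y)"
    unfolding automorphism_def partial_iso_def by auto
  then have "g z \<in> A" using in_A by (auto simp: bij_betw_def)
  have "R a (g z)" "R c (g z)"
    using preserves[of a z] preserves[of b z] in_A g_vals \<open>R a z\<close> \<open>R b z\<close> by auto
  then have "R b (g z)" using upper_bound \<open>g z \<in> A\<close> by blast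
  then have "R c z" using preserves[of c z] in_A g_vals by auto
  with \<open>\<not> R c z\<close> show False ..
qed

lemma prod_less_if_below_max:
  assumes "\<forall>k. b k \<le> max (a k) (c k)" "\<not> prod_less a b" "prod_less a w" "prod_less c w"
  shows "prod_less b w"
proof -
  have "b k \<le> w k" for k
    using assms(1,3,4) unfolding prod_less_def by (metis max.bounded_iff order_trans)
  moreover have "b \<noteq> w"
    using assms(2,3) by blast
  ultimately show ?thesis unfolding prod_less_def by blast
qed

lemma prod_less_if_less: "(\<And>k. x k < y k) \<Longrightarrow> prod_less x y"
  unfolding prod_less_def by (metis less_imp_le order.irrefl)

lemma not_prod_less_if_greater: "y k < x k \<Longrightarrow> \<not> prod_less x y"
  unfolding prod_less_def by (meson not_le)

lemma dense_in_Qn_unit_box: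
  assumes "dense_in_Qn D"
  obtains d where "d \<in> D" "\<forall>k. p k < d k \<and> d k < p k + 1"
  using assms[unfolded dense_in_Qn_def, rule_format, of p "\<lambda>k. p k + 1"] that by auto

lemma prod_order_swap_configuration:
  fixes D :: "('n::finite \<Rightarrow> rat) set" and i j :: 'n
  assumes "dense_in_Qn D" and "i \<noteq> j"
  obtains a b c z where "a \<in> D" "b \<in> D" "c \<in> D" "z \<in> D" "a \<noteq> b"
    "\<forall>x\<in>{a, b, c}. \<forall>y\<in>{a, b, c}. \<not> prod_less x y"
    "prod_less a z" "prod_less b z" "\<not> prod_less c z"
    "\<forall>k. b k \<le> max (a k) (c k)"
proof -
  \<comment> \<open>Each point lies in the unit box above an integer target; writing targets as
    (coordinate \<open>i\<close>, coordinate \<open>j\<close>, other coordinates) they are \<open>a \<approx> (0, 4, 4)\<close>,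
    \<open>b \<approx> (2, 2, 0)\<close>, \<open>c \<approx> (4, 0, 0)\<close>, \<open>z \<approx> (3, 6, 6)\<close>. Targets differing by at least 1
    in a coordinate order the points the same way there.\<close>
  obtain a where "a \<in> D"
    and a: "\<forall>k. ((\<lambda>_. 4)(i := 0)) k < a k \<and> a k < ((\<lambda>_. 4)(i := 0)) k + 1"
    using dense_in_Qn_unit_box[OF assms(1)] by blast
  obtain b where "b \<in> D"
    and b: "\<forall>k. ((\<lambda>_. 0)(i := 2, j := 2)) k < b k \<and> b k < ((\<lambda>_. 0)(i := 2, j := 2)) k + 1"
    using dense_in_Qn_unit_box[OF assms(1)] by blast
  obtain c where "c \<in> D"
    and c: "\<forall>k. ((\<lambda>_. 0)(i := 4)) k < c k \<and> c k < ((\<lambda>_. 0)(i := 4)) k + 1"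
    using dense_in_Qn_unit_box[OF assms(1)] by blast
  obtain z where "z \<in> D"
    and z: "\<forall>k. ((\<lambda>_. 6)(i := 3)) k < z k \<and> z k < ((\<lambda>_. 6)(i := 3)) k + 1"
    using dense_in_Qn_unit_box[OF assms(1)] by blast
  have off_i: "4 < a k" "a k < 5" "c k < 1" "6 < z k" if "k \<noteq> i" for k
    using a[rule_format, of k] c[rule_format, of k] z[rule_format, of k] that by simp_all
  have off_ij: "b k < 1" if "k \<noteq> i" "k \<noteq> j" for k
    using b[rule_format, of k] that by simp
  have at_ij: "a i < 1" "2 < b i" "b i < 3" "4 < c i" "3 < z i" "z i < 4" "2 < b j" "b j < 3"
    using a[rule_format, of i] b[rule_format, of i] b[rule_format, of j] c[rule_format, of i]
      z[rule_format, of i] \<open>i \<noteq> j\<close> by simp_all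
  have "a j > 4" "c j < 1"
    using off_i \<open>i \<noteq> j\<close> by auto
  have "\<not> prod_less a b" "\<not> prod_less a c" "\<not> prod_less b c"
    by (rule not_prod_less_if_greater[of _ j]; use at_ij \<open>a j > 4\<close> \<open>c j < 1\<close> in linarith)+
  moreover have "\<not> prod_less b a" "\<not> prod_less c a" "\<not> prod_less c b"
    by (rule not_prod_less_if_greater[of _ i]; use at_ij in linarith)+
  ultimately have antichain: "\<forall>x\<in>{a, b, c}. \<forall>y\<in>{a, b, c}. \<not> prod_less x y"
    by (auto simp: prod_less_def)
  have "prod_less a z"
  proof (rule prod_less_if_less)
    show "a k < z k" for k
      using at_ij off_i[of k] by (cases "k = i") auto
  qed
  moreover have "prod_less b z"
  proof (rule prod_less_if_less)
    show "b k < z k" for k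
      using at_ij off_i[of k] off_ij[of k] by (cases "k = i"; cases "k = j") auto
  qed
  moreover have "\<not> prod_less c z"
    by (rule not_prod_less_if_greater[of _ i]) (use at_ij in linarith)
  moreover have "\<forall>k. b k \<le> max (a k) (c k)"
  proof
    show "b k \<le> max (a k) (c k)" for k
      using at_ij off_i[of k] off_ij[of k] by (cases "k = i"; cases "k = j") auto
  qed
  moreover have "a \<noteq> b"
    using at_ij by force
  ultimately show ?thesis
    using that \<open>a \<in> D\<close> \<open>b \<in> D\<close> \<open>c \<in> D\<close> \<open>z \<in> D\<close> antichain by blast
qed

theorem proposition2p4:
  fixes D :: "('n::finite \<Rightarrow> rat) set"
  assumes "card (UNIV :: 'n set) \<ge> 2"
    and "dense_in_Qn D"
    and "no_shared_coord D"
  shows "\<not> ultrahomogeneous D prod_less"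
proof -
  have "\<not> card (UNIV :: 'n set) \<le> Suc 0"
    using assms(1) by simp
  then obtain i j :: 'n where "i \<noteq> j"
    by (auto simp: card_le_Suc0_iff_eq)
  then obtain a b c z where
    "a \<in> D" "b \<in> D" "c \<in> D" "z \<in> D" "a \<noteq> b"
    and antichain: "\<forall>x\<in>{a, b, c}. \<forall>y\<in>{a, b, c}. \<not> prod_less x y"
    and "prod_less a z" "prod_less b z" "\<not> prod_less c z"
    and below_max: "\<forall>k. b k \<le> max (a k) (c k)"
    by (rule prod_order_swap_configuration[OF assms(2)])
  have "\<not> prod_less a b"
    using antichain by simp
  then have "\<forall>w\<in>D. prod_less a w \<longrightarrow> prod_less c w \<longrightarrow> prod_less b w"
    using prod_less_if_below_max[OF below_max] by blast
  with \<open>a \<in> D\<close> \<open>b \<in> D\<close> \<open>c \<in> D\<close> \<open>z \<in> D\<close> \<open>a \<noteq> b\<close> antichain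
    \<open>prod_less a z\<close> \<open>prod_less b z\<close> \<open>\<not> prod_less c z\<close>
  show ?thesis
    by (rule not_ultrahomogeneous_by_swap)
qed

end
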